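(* Let $d > 1$ be an integer and let $K = \operatorname{Frac}(\mathcal{O})$ be the field of fractions of a complete discrete valuation ring $\mathcal{O}$ whose residue field is finite. In the coefficient-choosing game of degree $d$ over $K$, whichever player makes the last move has a winning strategy.
   Context: The coefficient-choosing game of degree $d$ over a commutative ring $R$ with unity: Nora and Wanda alternately choose coefficients of $f(x) = a_d x^d + \cdots + a_0$; on each move the current player picks a not-yet-chosen coefficient and assigns it a value in $R$, subject to $a_d \neq 0$, $a_0 \neq 0$. After all $d+1$ coefficients are chosen, Wanda wins if $f$ has a root in $\operatorname{Frac}(R)$ (here $R = K$ is a field, so a root in $K$), and Nora wins otherwise. Who moves first is fixed in advance, which determines who makes the last move. *)

theory Defs
  imports "HOL-Computational_Algebra.Polynomial"
begin

text \<open>A normalized discrete valuation v on a field (values on nonzero elements only;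
  the value at 0 is irrelevant, conventionally +infinity). Its valuation ring
  O = {x. x = 0 \<or> v x \<ge> 0} is a DVR with maximal ideal {x. x = 0 \<or> v x \<ge> 1},
  and the field is Frac(O).\<close>

definition val_ring :: "('k::field \<Rightarrow> int) \<Rightarrow> 'k set" where
  "val_ring v = {x. x = 0 \<or> v x \<ge> 0}"

definition val_ideal :: "('k::field \<Rightarrow> int) \<Rightarrow> int \<Rightarrow> 'k set" where
  "val_ideal v n = {x. x = 0 \<or> v x \<ge> n}"

definition discrete_valuation :: "('k::field \<Rightarrow> int) \<Rightarrow> bool" where
  "discrete_valuation v \<longleftrightarrow>
     (\<forall>x y. x \<noteq> 0 \<longrightarrow> y \<noteq> 0 \<longrightarrow> v (x * y) = v x + v y) \<and>
     (\<forall>x y. x \<noteq> 0 \<longrightarrow> y \<noteq> 0 \<longrightarrow> x + y \<noteq> 0 \<longrightarrow> v (x + y) \<ge> min (v x) (v y)) \<and>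
     (\<exists>\<pi>. \<pi> \<noteq> 0 \<and> v \<pi> = 1)"

definition finite_residue_field :: "('k::field \<Rightarrow> int) \<Rightarrow> bool" where
  "finite_residue_field v \<longleftrightarrow>
     (\<exists>F. finite F \<and> F \<subseteq> val_ring v \<and> (\<forall>x \<in> val_ring v. \<exists>y\<in>F. x - y \<in> val_ideal v 1))"

definition val_complete :: "('k::field \<Rightarrow> int) \<Rightarrow> bool" where
  "val_complete v \<longleftrightarrow>
     (\<forall>s :: nat \<Rightarrow> 'k.
        (\<forall>n. \<exists>N. \<forall>p\<ge>N. \<forall>q\<ge>N. s p - s q \<in> val_ideal v n) \<longrightarrow>
        (\<exists>L. \<forall>n. \<exists>N. \<forall>p\<ge>N. s p - L \<in> val_ideal v n))"

definition local_field_valuation :: "('k::field \<Rightarrow> int) \<Rightarrow> bool" where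
  "local_field_valuation v \<longleftrightarrow>
     discrete_valuation v \<and> finite_residue_field v \<and> val_complete v"

datatype player = Nora | Wanda

fun other :: "player \<Rightarrow> player" where
  "other Nora = Wanda" | "other Wanda = Nora"

text \<open>A position records which coefficients a_0..a_d have been chosen (Some value)
  and which are still open (None).\<close>
type_synonym 'k position = "nat \<Rightarrow> 'k option"

definition complete_pos :: "nat \<Rightarrow> 'k position \<Rightarrow> bool" where
  "complete_pos d a \<longleftrightarrow> (\<forall>i\<le>d. a i \<noteq> None)"

definition legal_move :: "nat \<Rightarrow> 'k::zero position \<Rightarrow> nat \<Rightarrow> 'k \<Rightarrow> bool" where
  "legal_move d a i c \<longleftrightarrow> i \<le> d \<and> a i = None \<and> ((i = d \<or> i = 0) \<longrightarrow> c \<noteq> 0)"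

definition final_poly :: "nat \<Rightarrow> 'k::comm_monoid_add position \<Rightarrow> 'k poly" where
  "final_poly d a = (\<Sum>i\<le>d. monom (the (a i)) i)"

definition winner :: "nat \<Rightarrow> 'k::field position \<Rightarrow> player" where
  "winner d a = (if \<exists>x. poly (final_poly d a) x = 0 then Wanda else Nora)"

text \<open>wins d P a m: player P has a winning strategy from position a when m is to move.
  The game has finite length, so the least fixed point captures exactly the
  existence of a winning strategy.\<close>
inductive wins :: "nat \<Rightarrow> player \<Rightarrow> 'k::field position \<Rightarrow> player \<Rightarrow> bool"
  for d :: nat and P :: player where
  finished: "complete_pos d a \<Longrightarrow> winner d a = P \<Longrightarrow> wins d P a m"
| own_move: "\<not> complete_pos d a \<Longrightarrow> legal_move d a i c \<Longrightarrow>
      wins d P (a(i := Some c)) (other P) \<Longrightarrow> wins d P a P"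
| opp_move: "\<not> complete_pos d a \<Longrightarrow> m \<noteq> P \<Longrightarrow>
      (\<forall>i c. legal_move d a i c \<longrightarrow> wins d P (a(i := Some c)) P) \<Longrightarrow> wins d P a m"

text \<open>There are d+1 moves in total; the player moving first makes moves 1,3,5,...\<close>
definition last_mover :: "nat \<Rightarrow> player \<Rightarrow> player" where
  "last_mover d first = (if even d then first else other first)"

end

theory Submission
  imports Defs
begin

text \<open>
  Whoever moves last wins. Wanda, moving last, picks x \<noteq> 0 at which the polynomial without its
  last coefficient does not vanish (the field is infinite) and solves for that coefficient.

  Nora, moving last, argues with Newton polygons: a root x makes two terms a_i x^i of least
  valuation, which forces an edge of integral slope -v x. She gives the last open coefficient a
  very negative valuation, with a residue chosen so that every edge of the resulting Newton
  polygon has non-integral slope. This works unless the last open coefficient is a_1 or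
  a_(d-1), and Nora moves often enough to set these to 0 beforehand. For d = 3 and d = 4 the
  coefficient a_2 needs separate arguments, in degree 3 a pigeonhole argument over the finite
  residue field.
\<close>

section \<open>Integer arithmetic\<close>

lemma above_chord_gt_min:
  fixes p i q A B a t :: int
  assumes "p < i" "i < q" "(q - i) * A + (i - p) * B < (q - p) * a"
  shows "min (A + p * t) (B + q * t) < a + i * t"
proof -
  let ?m = "min (A + p * t) (B + q * t)"
  have "(q - i) * ?m \<le> (q - i) * (A + p * t)" "(i - p) * ?m \<le> (i - p) * (B + q * t)"
    using assms(1,2) by (intro mult_left_mono; simp)+
  moreover have "(q - i) * (A + p * t) + (i - p) * (B + q * t)
      = (q - i) * A + (i - p) * B + (q - p) * (i * t)"
    by (simp add: algebra_simps)
  ultimately have "(q - p) * ?m < (q - p) * (a + i * t)"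
    using assms(3) by (simp add: algebra_simps)
  then show ?thesis using assms(1,2) by (simp add: mult_less_cancel_left)
qed

lemma below_chord_lt_max:
  fixes p i q A B a t :: int
  assumes "p < i" "i < q" "(q - p) * a < (q - i) * A + (i - p) * B"
  shows "a + i * t < max (A + p * t) (B + q * t)"
proof -
  let ?m = "max (A + p * t) (B + q * t)"
  have "(q - i) * (A + p * t) \<le> (q - i) * ?m" "(i - p) * (B + q * t) \<le> (i - p) * ?m"
    using assms(1,2) by (intro mult_left_mono; simp)+
  moreover have "(q - i) * (A + p * t) + (i - p) * (B + q * t)
      = (q - i) * A + (i - p) * B + (q - p) * (i * t)"
    by (simp add: algebra_simps)
  ultimately have "(q - p) * (a + i * t) < (q - p) * ?m"
    using assms(3) by (simp add: algebra_simps)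
  then show ?thesis using assms(1,2) by (simp add: mult_less_cancel_left)
qed

lemma add_mult_neq_of_not_dvd:
  fixes A B p q t :: int
  assumes "\<not> (q - p) dvd (B - A)"
  shows "A + p * t \<noteq> B + q * t"
proof
  assume "A + p * t = B + q * t"
  then have "B - A = (q - p) * (- t)" by (simp add: algebra_simps)
  with assms show False by (metis dvd_triv_left)
qed

lemma very_low_weighted_sum_less:
  fixes a c L V w z :: int
  assumes "0 < a" "0 \<le> c" "\<bar>w\<bar> \<le> V" "\<bar>z\<bar> \<le> V" "L \<le> - 2 * (a + c) * V - 1"
  shows "a * L + c * w < (a + c) * z"
proof -
  have "0 \<le> V" using assms(3) by simp
  then have "0 \<le> (a + c) * V" using assms(1,2) by simp
  then have "L \<le> 0" using assms(5) by (simp add: algebra_simps)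
  then have "a * L \<le> 1 * L" using assms(1) by (intro mult_right_mono_neg) simp_all
  moreover have "c * w \<le> c * V" using assms(2,3) by (intro mult_left_mono) simp_all
  moreover have "c * V \<le> (a + c) * V" using assms(1) \<open>0 \<le> V\<close> by (intro mult_right_mono) simp_all
  moreover have "(a + c) * (- V) \<le> (a + c) * z"
    using assms(1,2,4) by (intro mult_left_mono) simp_all
  ultimately show ?thesis using assms(5) by (simp add: algebra_simps)
qed

lemma very_low_point_below_chord:
  fixes a c L V x y :: int
  assumes "0 \<le> a" "0 \<le> c" "0 < a + c" "\<bar>x\<bar> \<le> V" "\<bar>y\<bar> \<le> V" "L \<le> - 2 * (a + c) * V - 1"
  shows "(a + c) * L < a * x + c * y"
proof -
  have "0 \<le> V" using assms(4) by simp
  then have "0 \<le> (a + c) * V" using assms(3) by simp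
  moreover from this have "L \<le> 0" using assms(6) by (simp add: algebra_simps)
  then have "(a + c) * L \<le> 1 * L" using assms(3) by (intro mult_right_mono_neg) simp_all
  moreover have "a * (- V) \<le> a * x" "c * (- V) \<le> c * y"
    using assms by (intro mult_left_mono; simp)+
  ultimately show ?thesis using assms(6) by (simp add: algebra_simps)
qed

lemma exists_le_of_shift_invariant:
  fixes P :: "int \<Rightarrow> bool"
  assumes "P L\<^sub>0" "0 < q" "\<And>L. P L \<Longrightarrow> P (L - q)"
  shows "\<exists>L \<le> N. P L"
proof -
  have shifted: "P (L\<^sub>0 - q * int k)" for k
  proof (induction k)
    case (Suc k)
    then show ?case using assms(3)[of "L\<^sub>0 - q * int k"] by (simp add: algebra_simps)
  qed (simp add: assms(1))
  define k where "k = nat (\<bar>L\<^sub>0\<bar> + \<bar>N\<bar>)"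
  have "int k \<le> q * int k" using assms(2) by (simp add: mult_le_cancel_right1)
  then have "L\<^sub>0 - q * int k \<le> N" unfolding k_def by linarith
  with shifted show ?thesis by blast
qed

lemma exists_le_not_dvd_diff:
  fixes D y N :: int
  assumes "2 \<le> D"
  shows "\<exists>L \<le> N. \<not> D dvd (y - L)"
proof (rule exists_le_of_shift_invariant)
  show "\<not> D dvd (y - (y - 1))" using assms by (auto dest: zdvd_imp_le)
  fix L assume "\<not> D dvd (y - L)"
  moreover have "y - (L - D) = (y - L) + D" by simp
  ultimately show "\<not> D dvd (y - (L - D))" by (metis dvd_add_left_iff dvd_refl)
qed (use assms in simp)

text \<open>For j = m = 2 the parity condition is necessary: (x - L) + (L - y) = x - y.\<close>
lemma exists_le_not_dvd_diffs:
  fixes j m x y N :: int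
  assumes "2 \<le> j" "2 \<le> m" "j = 2 \<and> m = 2 \<longrightarrow> 2 dvd (x - y)"
  shows "\<exists>L \<le> N. \<not> j dvd (x - L) \<and> \<not> m dvd (L - y)"
proof -
  have "\<exists>r \<in> {0, 1, 2}. \<not> j dvd (x - y - 1 - r) \<and> \<not> m dvd (1 + r)"
  proof -
    have no_dvd: "\<not> n dvd r" if "0 < r" "r < n" for n r :: int
      using that zdvd_imp_le by fastforce
    consider "j = 2" "m = 2" | "3 \<le> m" | "3 \<le> j" "m = 2" using assms(1,2) by linarith
    then show ?thesis
    proof cases
      case 1
      then have "odd (x - y - 1 - 0)" using assms(3) by simp
      then show ?thesis using 1 by auto
    next
      case 2
      have "\<not> j dvd (x - y - 1 - 0) \<or> \<not> j dvd (x - y - 1 - 1)"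
        using assms(1) no_dvd[of 1 j] dvd_diff[of j "x - y - 1 - 0" "x - y - 1 - 1"] by auto
      then show ?thesis using 2 no_dvd[of 1 m] no_dvd[of 2 m] by auto
    next
      case 3
      have "\<not> j dvd (x - y - 1 - 0) \<or> \<not> j dvd (x - y - 1 - 2)"
        using 3 no_dvd[of 2 j] dvd_diff[of j "x - y - 1 - 0" "x - y - 1 - 2"] by auto
      then show ?thesis using 3 by auto
    qed
  qed
  then obtain r where r: "\<not> j dvd (x - y - 1 - r)" "\<not> m dvd (1 + r)" by blast
  show ?thesis
  proof (rule exists_le_of_shift_invariant[where L\<^sub>0 = "y + 1 + r"])
    have "x - (y + 1 + r) = x - y - 1 - r" "(y + 1 + r) - y = 1 + r" by simp_all
    with r show "\<not> j dvd (x - (y + 1 + r)) \<and> \<not> m dvd ((y + 1 + r) - y)" by metis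
    show "0 < j * m" using assms by simp
    fix L assume "\<not> j dvd (x - L) \<and> \<not> m dvd (L - y)"
    moreover have "x - (L - j * m) = (x - L) + j * m" "L - j * m - y = (L - y) - m * j"
      by (simp_all add: algebra_simps)
    ultimately show "\<not> j dvd (x - (L - j * m)) \<and> \<not> m dvd (L - j * m - y)"
      by (metis dvd_add_left_iff dvd_diff_left_iff dvd_triv_left)
  qed
qed

section \<open>Discretely valued fields\<close>

locale valued_field =
  fixes v :: "'k::field \<Rightarrow> int"
  assumes discrete_valuation: "discrete_valuation v"
begin

abbreviation I :: "int \<Rightarrow> 'k set" where
  "I n \<equiv> val_ideal v n"

lemma v_mult: "x \<noteq> 0 \<Longrightarrow> y \<noteq> 0 \<Longrightarrow> v (x * y) = v x + v y"
  using discrete_valuation by (simp add: discrete_valuation_def)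

lemma v_add: "x \<noteq> 0 \<Longrightarrow> y \<noteq> 0 \<Longrightarrow> x + y \<noteq> 0 \<Longrightarrow> min (v x) (v y) \<le> v (x + y)"
  using discrete_valuation by (simp add: discrete_valuation_def)

lemma v_one [simp]: "v 1 = 0"
  using v_mult[of 1 1] by simp

lemma v_minus: "x \<noteq> 0 \<Longrightarrow> v (- x) = v x"
  using v_mult[of "-1" "-1"] v_mult[of "-1" x] by simp

lemma v_inverse: "x \<noteq> 0 \<Longrightarrow> v (inverse x) = - v x"
  using v_mult[of x "inverse x"] by simp

lemma v_divide: "x \<noteq> 0 \<Longrightarrow> y \<noteq> 0 \<Longrightarrow> v (x / y) = v x - v y"
  by (simp add: divide_inverse v_mult v_inverse)

lemma v_power: "x \<noteq> 0 \<Longrightarrow> v (x ^ n) = int n * v x"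
  by (induction n) (simp_all add: v_mult algebra_simps)

lemma ex_valuation_eq: "\<exists>c. c \<noteq> 0 \<and> v c = L"
proof -
  obtain \<pi> where \<pi>: "\<pi> \<noteq> 0" "v \<pi> = 1"
    using discrete_valuation by (auto simp: discrete_valuation_def)
  show ?thesis
  proof (cases "0 \<le> L")
    case True
    then show ?thesis using \<pi> by (intro exI[of _ "\<pi> ^ nat L"]) (simp add: v_power)
  next
    case False
    then show ?thesis
      using \<pi> by (intro exI[of _ "inverse \<pi> ^ nat (- L)"]) (simp add: v_power v_inverse)
  qed
qed

lemma infinite_UNIV: "infinite (UNIV :: 'k set)"
proof -
  obtain \<pi> where \<pi>: "\<pi> \<noteq> 0" "v \<pi> = 1"
    using discrete_valuation by (auto simp: discrete_valuation_def)
  have "inj (\<lambda>n::nat. \<pi> ^ n)"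
  proof (rule injI)
    fix m n :: nat
    assume "\<pi> ^ m = \<pi> ^ n"
    then have "v (\<pi> ^ m) = v (\<pi> ^ n)" by simp
    then show "m = n" using \<pi> by (simp add: v_power)
  qed
  then have "infinite (range (\<lambda>n::nat. \<pi> ^ n))" by (rule range_inj_infinite)
  then show ?thesis by (rule infinite_super[OF subset_UNIV])
qed

lemma I_iff: "x \<in> I n \<longleftrightarrow> x = 0 \<or> n \<le> v x"
  by (simp add: val_ideal_def)

lemma zero_in_I [simp]: "0 \<in> I n"
  by (simp add: I_iff)

lemma one_in_I0 [simp]: "1 \<in> I 0"
  by (simp add: I_iff)

lemma I_add:
  assumes "x \<in> I n" "y \<in> I n"
  shows "x + y \<in> I n"
proof (cases "x = 0 \<or> y = 0 \<or> x + y = 0")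
  case False
  then show ?thesis using assms v_add[of x y] by (auto simp: I_iff)
qed (use assms in auto)

lemma I_minus: "x \<in> I n \<Longrightarrow> - x \<in> I n"
  by (cases "x = 0") (simp_all add: I_iff v_minus)

lemma I_diff: "x \<in> I n \<Longrightarrow> y \<in> I n \<Longrightarrow> x - y \<in> I n"
  using I_add[of x n "- y"] I_minus[of y n] by simp

lemma I_mult: "x \<in> I n \<Longrightarrow> y \<in> I m \<Longrightarrow> x * y \<in> I (n + m)"
  by (cases "x = 0 \<or> y = 0") (auto simp: I_iff v_mult)

lemma I0_mult: "c \<in> I 0 \<Longrightarrow> x \<in> I n \<Longrightarrow> c * x \<in> I n"
  using I_mult[of c 0 x n] by simp

lemma I0_power: "x \<in> I 0 \<Longrightarrow> x ^ k \<in> I 0"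
  by (induction k) (simp_all add: I0_mult)

lemma I_antimono: "x \<in> I n \<Longrightarrow> m \<le> n \<Longrightarrow> x \<in> I m"
  by (auto simp: I_iff)

lemma I1_power: "x \<in> I 1 \<Longrightarrow> 0 < k \<Longrightarrow> x ^ k \<in> I 1"
  using I0_mult[of "x ^ (k - 1)" x 1] I0_power[of x "k - 1"] I_antimono[of x 1 0]
  by (simp add: power_eq_if mult.commute)

lemma I_sum: "(\<And>i. i \<in> S \<Longrightarrow> f i \<in> I n) \<Longrightarrow> sum f S \<in> I n"
  by (induction S rule: infinite_finite_induct) (auto intro: I_add)

lemma power_diff_in_I1:
  assumes "x \<in> I 0" "y \<in> I 0" "x - y \<in> I 1"
  shows "x ^ k - y ^ k \<in> I 1"
proof (induction k)
  case (Suc k)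
  have "x ^ Suc k - y ^ Suc k = x * (x ^ k - y ^ k) + y ^ k * (x - y)"
    by (simp add: algebra_simps)
  moreover have "x * (x ^ k - y ^ k) \<in> I 1" using assms(1) Suc by (rule I0_mult)
  moreover have "y ^ k * (x - y) \<in> I 1" using assms(2,3) by (simp add: I0_mult I0_power)
  ultimately show ?case by (simp add: I_add)
qed simp

lemma I1_of_unit_mult:
  assumes "u \<noteq> 0" "v u = 0" "x * u \<in> I 1"
  shows "x \<in> I 1"
  using assms by (cases "x = 0") (auto simp: I_iff v_mult)

lemma sum_nonzero_of_strict_min_term:
  fixes b :: "nat \<Rightarrow> 'k"
  assumes "x \<noteq> 0" "k \<le> d" "b k \<noteq> 0"
    and "\<And>i. i \<le> d \<Longrightarrow> i \<noteq> k \<Longrightarrow> b i \<noteq> 0 \<Longrightarrow> v (b k) + int k * v x < v (b i) + int i * v x"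
  shows "(\<Sum>i\<le>d. b i * x ^ i) \<noteq> 0"
proof
  let ?m = "v (b k * x ^ k)"
  have min_term: "?m = v (b k) + int k * v x" using assms(1,3) by (simp add: v_mult v_power)
  have "b i * x ^ i \<in> I (?m + 1)" if "i \<in> {..d} - {k}" for i
  proof (cases "b i = 0")
    case False
    then show ?thesis
      using that assms(1) assms(4)[of i] by (simp add: I_iff v_mult v_power min_term)
  qed simp
  then have rest: "(\<Sum>i\<in>{..d} - {k}. b i * x ^ i) \<in> I (?m + 1)" by (rule I_sum)
  have split: "(\<Sum>i\<le>d. b i * x ^ i) = b k * x ^ k + (\<Sum>i\<in>{..d} - {k}. b i * x ^ i)"
    using assms(2) sum.remove[of "{..d}" k] by simp
  assume "(\<Sum>i\<le>d. b i * x ^ i) = 0"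
  then have "b k * x ^ k = - (\<Sum>i\<in>{..d} - {k}. b i * x ^ i)"
    unfolding split by (rule eq_neg_iff_add_eq_0[THEN iffD2])
  then have "b k * x ^ k \<in> I (?m + 1)" using I_minus[OF rest] by argo
  moreover have "b k * x ^ k \<noteq> 0" using assms(1,3) by simp
  ultimately show False unfolding I_iff by linarith
qed

end

section \<open>Newton polygons\<close>

lemma power_sum_at_zero: "(\<Sum>i\<le>d. b i * (0::'a::semiring_1) ^ i) = b 0"
  by (induction d) simp_all

context valued_field
begin

lemma power_sum_nonzero_of_strict_min_vertex:
  fixes b :: "nat \<Rightarrow> 'k"
  assumes "x \<noteq> 0" "k \<in> N" "N \<subseteq> {..d}" "\<And>i. i \<in> N \<Longrightarrow> b i \<noteq> 0"
    and vertex_min: "\<And>l. l \<in> N \<Longrightarrow> l \<noteq> k \<Longrightarrow> v (b k) + int k * v x < v (b l) + int l * v x"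
    and above_vertices: "\<And>i. i \<le> d \<Longrightarrow> i \<notin> N \<Longrightarrow> b i \<noteq> 0 \<Longrightarrow>
      \<exists>l \<in> N. v (b l) + int l * v x < v (b i) + int i * v x"
  shows "(\<Sum>i\<le>d. b i * x ^ i) \<noteq> 0"
proof (rule sum_nonzero_of_strict_min_term)
  show "k \<le> d" "b k \<noteq> 0" using assms(2-4) by auto
  fix i assume i: "i \<le> d" "i \<noteq> k" "b i \<noteq> 0"
  show "v (b k) + int k * v x < v (b i) + int i * v x"
  proof (cases "i \<in> N")
    case False
    then obtain l where "l \<in> N" "v (b l) + int l * v x < v (b i) + int i * v x"
      using above_vertices i by blast
    then show ?thesis using vertex_min[of l] by fastforce
  qed (use i vertex_min in blast)
qed (use assms(1) in simp)

text \<open>The Newton polygon is the single edge from (0, v b_0) to (d, v b_d) and its slope is not an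
  integer, so for x \<noteq> 0 one of the two end terms is the unique term of least valuation.\<close>
lemma power_sum_nonzero_single_edge:
  fixes b :: "nat \<Rightarrow> 'k"
  assumes "1 \<le> d" "b 0 \<noteq> 0" "b d \<noteq> 0"
    and above: "\<And>i. 0 < i \<Longrightarrow> i < d \<Longrightarrow> b i \<noteq> 0 \<Longrightarrow>
      (int d - int i) * v (b 0) + int i * v (b d) < int d * v (b i)"
    and slope: "\<not> int d dvd (v (b d) - v (b 0))"
  shows "(\<Sum>i\<le>d. b i * x ^ i) \<noteq> 0"
proof (cases "x = 0")
  case True
  then show ?thesis using assms(2) by (simp add: power_sum_at_zero)
next
  case False
  let ?T = "\<lambda>i. v (b i) + int i * v x"
  have "?T 0 \<noteq> ?T d"
    using add_mult_neq_of_not_dvd[of "int d" 0 "v (b d)" "v (b 0)" "v x"] slope by simp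
  define k where "k = (if ?T 0 < ?T d then 0 else d)"
  have k: "k \<in> {0, d}" "\<And>l. l \<in> {0, d} \<Longrightarrow> l \<noteq> k \<Longrightarrow> ?T k < ?T l"
    using \<open>?T 0 \<noteq> ?T d\<close> by (auto simp: k_def)
  show ?thesis
  proof (rule power_sum_nonzero_of_strict_min_vertex[OF False k(1) _ _ k(2)])
    fix i assume "i \<le> d" "i \<notin> {0, d}" "b i \<noteq> 0"
    then have "min (?T 0) (?T d) < ?T i"
      using above_chord_gt_min[of 0 "int i" "int d" "v (b 0)" "v (b d)" "v (b i)" "v x"] above[of i]
      by simp
    then show "\<exists>l \<in> {0, d}. ?T l < ?T i" by (auto simp: min_less_iff_disj)
  qed (use assms(2,3) in auto)
qed

text \<open>The Newton polygon has two edges meeting at (j, v b_j), both of non-integral slope.\<close>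
lemma power_sum_nonzero_two_edges:
  fixes b :: "nat \<Rightarrow> 'k"
  assumes "0 < j" "j < d" "b 0 \<noteq> 0" "b j \<noteq> 0" "b d \<noteq> 0"
    and above_left: "\<And>i. 0 < i \<Longrightarrow> i < j \<Longrightarrow> b i \<noteq> 0 \<Longrightarrow>
      (int j - int i) * v (b 0) + int i * v (b j) < int j * v (b i)"
    and above_right: "\<And>i. j < i \<Longrightarrow> i < d \<Longrightarrow> b i \<noteq> 0 \<Longrightarrow>
      (int d - int i) * v (b j) + (int i - int j) * v (b d) < (int d - int j) * v (b i)"
    and convex: "int d * v (b j) < (int d - int j) * v (b 0) + int j * v (b d)"
    and slopes: "\<not> int j dvd (v (b 0) - v (b j))" "\<not> (int d - int j) dvd (v (b j) - v (b d))"
  shows "(\<Sum>i\<le>d. b i * x ^ i) \<noteq> 0"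
proof (cases "x = 0")
  case True
  then show ?thesis using assms(3) by (simp add: power_sum_at_zero)
next
  case False
  let ?T = "\<lambda>i. v (b i) + int i * v x"
  have "?T 0 \<noteq> ?T j"
    using add_mult_neq_of_not_dvd[of "int j" 0 "v (b j)" "v (b 0)" "v x"] slopes(1)
    by (simp add: dvd_diff_commute)
  moreover have "?T j \<noteq> ?T d"
    using add_mult_neq_of_not_dvd[of "int d" "int j" "v (b d)" "v (b j)" "v x"] slopes(2)
    by (simp add: dvd_diff_commute)
  moreover have "?T j < max (?T 0) (?T d)"
    using below_chord_lt_max[of 0 "int j" "int d" "v (b j)" "v (b 0)" "v (b d)" "v x"]
      convex assms(1,2) by simp
  ultimately have vertices: "?T j < ?T 0 \<and> ?T j < ?T d \<or> ?T 0 < ?T j \<and> ?T 0 < ?T d \<or>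
      ?T d < ?T j \<and> ?T d < ?T 0"
    by linarith
  define k where "k = (if ?T j < ?T 0 \<and> ?T j < ?T d then j else if ?T 0 < ?T d then 0 else d)"
  have k: "k \<in> {0, j, d}" "\<And>l. l \<in> {0, j, d} \<Longrightarrow> l \<noteq> k \<Longrightarrow> ?T k < ?T l"
    using vertices by (auto simp: k_def)
  show ?thesis
  proof (rule power_sum_nonzero_of_strict_min_vertex[OF False k(1) _ _ k(2)])
    fix i assume i: "i \<le> d" "i \<notin> {0, j, d}" "b i \<noteq> 0"
    show "\<exists>l \<in> {0, j, d}. ?T l < ?T i"
    proof (cases "i < j")
      case True
      then have "min (?T 0) (?T j) < ?T i"
        using above_chord_gt_min[of 0 "int i" "int j" "v (b 0)" "v (b j)" "v (b i)" "v x"]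
          above_left[of i] i by simp
      then show ?thesis by (auto simp: min_less_iff_disj)
    next
      case False
      then have "min (?T j) (?T d) < ?T i"
        using above_chord_gt_min[of "int j" "int i" "int d" "v (b j)" "v (b d)" "v (b i)" "v x"]
          above_right[of i] i by simp
      then show ?thesis by (auto simp: min_less_iff_disj)
    qed
  qed (use assms(1-5) in auto)
qed

end

section \<open>Choosing the last coefficient\<close>

context valued_field
begin

text \<open>Giving the constant term a very negative valuation leaves the single edge from it to the
  leading term as Newton polygon; its slope is made non-integral by the choice of residue.\<close>
lemma exists_const_coeff_no_root:
  fixes b :: "nat \<Rightarrow> 'k"
  assumes "2 \<le> d" "b d \<noteq> 0"
  shows "\<exists>c. c \<noteq> 0 \<and> (\<forall>x. (\<Sum>i\<le>d. (b(0 := c)) i * x ^ i) \<noteq> 0)"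
proof -
  define V where "V = (\<Sum>k\<le>d. \<bar>v (b k)\<bar>)"
  have V: "\<bar>v (b i)\<bar> \<le> V" if "i \<le> d" for i
    using that member_le_sum[of i "{..d}" "\<lambda>k. \<bar>v (b k)\<bar>"] by (simp add: V_def)
  obtain L where L: "L \<le> - 2 * int d * V - 1" "\<not> int d dvd (v (b d) - L)"
    using exists_le_not_dvd_diff[of "int d"] assms(1) by fastforce
  obtain c where c: "c \<noteq> 0" "v c = L" using ex_valuation_eq by blast
  have "(\<Sum>i\<le>d. (b(0 := c)) i * x ^ i) \<noteq> 0" for x
  proof (rule power_sum_nonzero_single_edge)
    fix i assume i: "0 < i" "i < d" "(b(0 := c)) i \<noteq> 0"
    have "(int d - int i) * L + int i * v (b d) < (int d - int i + int i) * v (b i)"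
      using very_low_weighted_sum_less[of "int d - int i" "int i" "v (b d)" V "v (b i)" L]
        i L(1) V[of d] V[of i] by simp
    then show "(int d - int i) * v ((b(0 := c)) 0) + int i * v ((b(0 := c)) d)
        < int d * v ((b(0 := c)) i)"
      using i c by simp
  qed (use assms c L in auto)
  with c show ?thesis by blast
qed

lemma exists_lead_coeff_no_root:
  fixes b :: "nat \<Rightarrow> 'k"
  assumes "2 \<le> d" "b 0 \<noteq> 0"
  shows "\<exists>c. c \<noteq> 0 \<and> (\<forall>x. (\<Sum>i\<le>d. (b(d := c)) i * x ^ i) \<noteq> 0)"
proof -
  define V where "V = (\<Sum>k\<le>d. \<bar>v (b k)\<bar>)"
  have V: "\<bar>v (b i)\<bar> \<le> V" if "i \<le> d" for i
    using that member_le_sum[of i "{..d}" "\<lambda>k. \<bar>v (b k)\<bar>"] by (simp add: V_def)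
  obtain L where L: "L \<le> - 2 * int d * V - 1" "\<not> int d dvd (v (b 0) - L)"
    using exists_le_not_dvd_diff[of "int d"] assms(1) by fastforce
  obtain c where c: "c \<noteq> 0" "v c = L" using ex_valuation_eq by blast
  have "(\<Sum>i\<le>d. (b(d := c)) i * x ^ i) \<noteq> 0" for x
  proof (rule power_sum_nonzero_single_edge)
    fix i assume i: "0 < i" "i < d" "(b(d := c)) i \<noteq> 0"
    have "int i * L + (int d - int i) * v (b 0) < (int i + (int d - int i)) * v (b i)"
      using very_low_weighted_sum_less[of "int i" "int d - int i" "v (b 0)" V "v (b i)" L]
        i L(1) V[of 0] V[of i] by simp
    then show "(int d - int i) * v ((b(d := c)) 0) + int i * v ((b(d := c)) d)
        < int d * v ((b(d := c)) i)"
      using i c by simp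
  next
    show "\<not> int d dvd (v ((b(d := c)) d) - v ((b(d := c)) 0))"
      using L(2) c assms(1) by (simp add: dvd_diff_commute)
  qed (use assms c in auto)
  with c show ?thesis by blast
qed

text \<open>A very negative valuation at j turns (j, v c) into a vertex of the Newton polygon, splitting
  it into edges of horizontal lengths j and d - j. Both slopes can be made non-integral unless
  j = d - j = 2 and v b_0, v b_4 have different parity.\<close>
lemma exists_middle_coeff_no_root:
  fixes b :: "nat \<Rightarrow> 'k"
  assumes "2 \<le> j" "j + 2 \<le> d" "b 0 \<noteq> 0" "b d \<noteq> 0"
    and "j = 2 \<and> d = 4 \<longrightarrow> 2 dvd (v (b 0) - v (b d))"
  shows "\<exists>c. c \<noteq> 0 \<and> (\<forall>x. (\<Sum>i\<le>d. (b(j := c)) i * x ^ i) \<noteq> 0)"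
proof -
  define V where "V = (\<Sum>k\<le>d. \<bar>v (b k)\<bar>)"
  have V: "\<bar>v (b i)\<bar> \<le> V" if "i \<le> d" for i
    using that member_le_sum[of i "{..d}" "\<lambda>k. \<bar>v (b k)\<bar>"] by (simp add: V_def)
  have "0 \<le> V" using V[of 0] by simp
  have "int j = 2 \<and> int d - int j = 2 \<longrightarrow> 2 dvd (v (b 0) - v (b d))"
    using assms(5) by linarith
  then obtain L where L: "L \<le> - 2 * int d * V - 1" "\<not> int j dvd (v (b 0) - L)"
      "\<not> (int d - int j) dvd (L - v (b d))"
    using exists_le_not_dvd_diffs[of "int j" "int d - int j" "v (b 0)" "v (b d)"
        "- 2 * int d * V - 1"] assms(1,2)
    by auto
  have "int j * V \<le> int d * V" "(int d - int j) * V \<le> int d * V"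
    using assms(1,2) \<open>0 \<le> V\<close> by (intro mult_right_mono; simp)+
  then have L_left: "L \<le> - 2 * int j * V - 1" and L_right: "L \<le> - 2 * (int d - int j) * V - 1"
    using L(1) by (simp_all add: algebra_simps)
  obtain c where c: "c \<noteq> 0" "v c = L" using ex_valuation_eq by blast
  have "(\<Sum>i\<le>d. (b(j := c)) i * x ^ i) \<noteq> 0" for x
  proof (rule power_sum_nonzero_two_edges[where j = j])
    show "int d * v ((b(j := c)) j)
        < (int d - int j) * v ((b(j := c)) 0) + int j * v ((b(j := c)) d)"
      using very_low_point_below_chord[of "int d - int j" "int j" "v (b 0)" V "v (b d)" L]
        assms(1,2) L(1) V[of 0] V[of d] c by simp
  next
    fix i assume i: "0 < i" "i < j" "(b(j := c)) i \<noteq> 0"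
    have "int i * L + (int j - int i) * v (b 0) < (int i + (int j - int i)) * v (b i)"
      using very_low_weighted_sum_less[of "int i" "int j - int i" "v (b 0)" V "v (b i)" L]
        i assms(2) L_left V[of 0] V[of i] by simp
    then show "(int j - int i) * v ((b(j := c)) 0) + int i * v ((b(j := c)) j)
        < int j * v ((b(j := c)) i)"
      using i c by simp
  next
    fix i assume i: "j < i" "i < d" "(b(j := c)) i \<noteq> 0"
    have "(int d - int i) * L + (int i - int j) * v (b d)
        < (int d - int i + (int i - int j)) * v (b i)"
      using very_low_weighted_sum_less[of "int d - int i" "int i - int j" "v (b d)" V "v (b i)" L]
        i L_right V[of d] V[of i] by simp
    then show "(int d - int i) * v ((b(j := c)) j) + (int i - int j) * v ((b(j := c)) d)
        < (int d - int j) * v ((b(j := c)) i)"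
      using i c by simp
  qed (use assms(1-4) c L(2,3) in simp_all)
  with c show ?thesis by blast
qed

lemma quartic_no_root_of_odd_gap:
  fixes b :: "nat \<Rightarrow> 'k"
  assumes "b 0 \<noteq> 0" "b 4 \<noteq> 0" "b 1 = 0" "b 2 = 0" "b 3 = 0"
    and "\<not> 2 dvd (v (b 0) - v (b 4))"
  shows "(\<Sum>i\<le>4. b i * x ^ i) \<noteq> 0"
proof (rule power_sum_nonzero_single_edge)
  show "\<not> int 4 dvd (v (b 4) - v (b 0))"
    using assms(6) dvd_trans[of 2 4 "v (b 4) - v (b 0)"] by (auto simp: dvd_diff_commute)
  fix i :: nat assume "0 < i" "i < 4" "b i \<noteq> 0"
  then show "(int 4 - int i) * v (b 0) + int i * v (b 4) < int 4 * v (b i)"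
    using assms(3-5) by (auto simp: numeral_eq_Suc less_Suc_eq)
qed (use assms in auto)

lemma unit_add_I1_nonzero: "u \<noteq> 0 \<Longrightarrow> v u = 0 \<Longrightarrow> r \<in> I 1 \<Longrightarrow> u + r \<noteq> 0"
  by (auto simp: I_iff add_eq_0_iff v_minus)

lemma obtain_residue_system:
  assumes "finite_residue_field v"
  obtains F where "finite F" "F \<subseteq> I 0" "\<And>x. x \<in> I 0 \<Longrightarrow> \<exists>f \<in> F. x - f \<in> I 1"
    "\<And>f g. f \<in> F \<Longrightarrow> g \<in> F \<Longrightarrow> f - g \<in> I 1 \<Longrightarrow> f = g"
proof -
  define covers where "covers F \<longleftrightarrow> finite F \<and> F \<subseteq> I 0 \<and> (\<forall>x \<in> I 0. \<exists>f \<in> F. x - f \<in> I 1)"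
    for F
  have "val_ring v = I 0" by (simp add: val_ring_def val_ideal_def)
  then obtain F\<^sub>0 where "covers F\<^sub>0"
    using assms by (auto simp: finite_residue_field_def covers_def)
  then obtain F where F: "covers F" and min: "\<And>G. covers G \<Longrightarrow> card F \<le> card G"
    using ex_has_least_nat[of covers F\<^sub>0 card] by blast
  have "f = g" if fg: "f \<in> F" "g \<in> F" "f - g \<in> I 1" for f g
  proof (rule ccontr)
    assume "f \<noteq> g"
    have "covers (F - {g})"
      unfolding covers_def
    proof (intro conjI ballI)
      fix x assume "x \<in> I 0"
      then obtain h where h: "h \<in> F" "x - h \<in> I 1" using F by (auto simp: covers_def)
      show "\<exists>f' \<in> F - {g}. x - f' \<in> I 1"
      proof (cases "h = g")
        case True
        have "x - f = (x - h) - (f - g)" using True by simp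
        then have "x - f \<in> I 1" using h fg(3) I_diff by metis
        then show ?thesis using \<open>f \<noteq> g\<close> fg(1) by blast
      qed (use h in blast)
    qed (use F in \<open>auto simp: covers_def\<close>)
    then have "card F \<le> card (F - {g})" by (rule min)
    moreover have "card (F - {g}) < card F"
      using F fg(2) unfolding covers_def by (metis card_Diff1_less)
    ultimately show False by simp
  qed
  with F that show ?thesis by (auto simp: covers_def)
qed

text \<open>Pigeonhole in the residue field: the q - 1 unit residue classes forbid at most q - 1 of the
  q residue classes for g.\<close>
lemma exists_residue_avoiding_units:
  assumes "finite_residue_field v"
    and unique: "\<And>y g g'. y \<noteq> 0 \<Longrightarrow> v y = 0 \<Longrightarrow> g \<in> I 0 \<Longrightarrow> g' \<in> I 0 \<Longrightarrow>
      P y g \<Longrightarrow> P y g' \<Longrightarrow> g - g' \<in> I 1"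
    and cong: "\<And>y y' g. y \<noteq> 0 \<Longrightarrow> v y = 0 \<Longrightarrow> y' \<in> I 0 \<Longrightarrow> y - y' \<in> I 1 \<Longrightarrow> g \<in> I 0 \<Longrightarrow>
      P y g \<Longrightarrow> P y' g"
  shows "\<exists>g \<in> I 0. \<forall>y. y \<noteq> 0 \<longrightarrow> v y = 0 \<longrightarrow> \<not> P y g"
proof -
  obtain F where F: "finite F" "F \<subseteq> I 0" and rep: "\<And>x. x \<in> I 0 \<Longrightarrow> \<exists>f \<in> F. x - f \<in> I 1"
    and distinct: "\<And>f g. f \<in> F \<Longrightarrow> g \<in> F \<Longrightarrow> f - g \<in> I 1 \<Longrightarrow> f = g"
    using obtain_residue_system[OF assms(1)] by blast
  define U where "U = {f \<in> F. f \<notin> I 1}"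
  have U_unit: "f \<noteq> 0 \<and> v f = 0" if "f \<in> U" for f
    using that F(2) by (auto simp: U_def I_iff)
  define forbidden where "forbidden f = (SOME g. g \<in> F \<and> P f g)" for f
  obtain z where "z \<in> F" "0 - z \<in> I 1" using rep[of 0] by auto
  then have "z \<in> F - U" using I_minus[of "0 - z" 1] by (simp add: U_def)
  then have "U \<subset> F" by (auto simp: U_def)
  then have "card (forbidden ` U) < card F"
    using F(1) card_image_le[of U forbidden] psubset_card_mono[of F U] finite_subset by fastforce
  moreover have "finite (forbidden ` U)" using F(1) \<open>U \<subset> F\<close> finite_subset by blast
  ultimately have "\<not> F \<subseteq> forbidden ` U" by (meson card_mono leD)
  then obtain g where g: "g \<in> F" "g \<notin> forbidden ` U" by blast
  have "\<not> P y g" if y: "y \<noteq> 0" "v y = 0" for y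
  proof
    assume "P y g"
    have "y \<in> I 0" using y by (simp add: I_iff)
    then obtain f where f: "f \<in> F" "y - f \<in> I 1" using rep by blast
    have "f \<notin> I 1"
    proof
      assume "f \<in> I 1"
      then have "(y - f) + f \<in> I 1" using f(2) I_add by blast
      then show False using y by (simp add: I_iff)
    qed
    with f(1) have "f \<in> U" by (simp add: U_def)
    have "P f g" using cong[OF y _ f(2) _ \<open>P y g\<close>] f(1) g(1) F(2) by auto
    then have "forbidden f \<in> F \<and> P f (forbidden f)"
      unfolding forbidden_def using g(1) by (metis (mono_tags, lifting) someI)
    then have "g = forbidden f"
      using distinct unique[OF conjunct1[OF U_unit] conjunct2[OF U_unit]] \<open>f \<in> U\<close> g(1) F(2) \<open>P f g\<close>
      by blast
    with \<open>f \<in> U\<close> g(2) show False by blast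
  qed
  with g(1) F(2) show ?thesis by blast
qed

lemma exists_coeff_no_unit_root_mod:
  assumes "finite_residue_field v" "u \<in> I 0"
  shows "\<exists>g \<in> I 0. \<forall>y. y \<noteq> 0 \<longrightarrow> v y = 0 \<longrightarrow> u * y ^ 3 + g * y ^ 2 + 1 \<notin> I 1"
proof (rule exists_residue_avoiding_units[OF assms(1)])
  fix y g g'
  assume y: "y \<noteq> 0" "v y = 0"
    and roots: "u * y ^ 3 + g * y ^ 2 + 1 \<in> I 1" "u * y ^ 3 + g' * y ^ 2 + 1 \<in> I 1"
  have "(g - g') * y ^ 2 = (u * y ^ 3 + g * y ^ 2 + 1) - (u * y ^ 3 + g' * y ^ 2 + 1)"
    by (simp add: algebra_simps)
  also have "\<dots> \<in> I 1" using roots by (rule I_diff)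
  finally have "(g - g') * y ^ 2 \<in> I 1" .
  moreover have "y ^ 2 \<noteq> 0" "v (y ^ 2) = 0" using y by (simp_all add: v_power)
  ultimately show "g - g' \<in> I 1" using I1_of_unit_mult by blast
next
  fix y y' g
  assume y: "y \<noteq> 0" "v y = 0" and y': "y' \<in> I 0" "y - y' \<in> I 1"
    and g: "g \<in> I 0" and root: "u * y ^ 3 + g * y ^ 2 + 1 \<in> I 1"
  have "y \<in> I 0" using y by (simp add: I_iff)
  then have cubes: "u * (y ^ 3 - y' ^ 3) \<in> I 1" and squares: "g * (y ^ 2 - y' ^ 2) \<in> I 1"
    using y' assms(2) g by (simp_all add: I0_mult power_diff_in_I1)
  have "u * y' ^ 3 + g * y' ^ 2 + 1
      = (u * y ^ 3 + g * y ^ 2 + 1) - (u * (y ^ 3 - y' ^ 3) + g * (y ^ 2 - y' ^ 2))"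
    by (simp add: algebra_simps)
  also have "\<dots> \<in> I 1" using root by (rule I_diff[OF _ I_add[OF cubes squares]])
  finally show "u * y' ^ 3 + g * y' ^ 2 + 1 \<in> I 1" .
qed

text \<open>For v y > 0 the constant term dominates, for v y < 0 the cubic term.\<close>
lemma normalized_cubic_nonzero:
  assumes "u \<noteq> 0" "v u = 0" "g \<in> I 0"
    and no_unit_root: "\<And>y. y \<noteq> 0 \<Longrightarrow> v y = 0 \<Longrightarrow> u * y ^ 3 + g * y ^ 2 + 1 \<notin> I 1"
  shows "u * y ^ 3 + g * y ^ 2 + 1 \<noteq> 0"
proof -
  have "u \<in> I 0" using assms(2) by (simp add: I_iff)
  consider "y = 0" | "y \<noteq> 0" "0 < v y" | "y \<noteq> 0" "v y < 0" | "y \<noteq> 0" "v y = 0" by linarith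
  then show ?thesis
  proof cases
    case 2
    then have "y \<in> I 1" by (simp add: I_iff)
    then have "u * y ^ 3 + g * y ^ 2 \<in> I 1"
      using \<open>u \<in> I 0\<close> assms(3) by (simp add: I_add I0_mult I1_power)
    then show ?thesis
      using unit_add_I1_nonzero[of 1 "u * y ^ 3 + g * y ^ 2"] by (simp add: add.commute)
  next
    case 3
    define z where "z = inverse y"
    have "z \<in> I 1" using 3 by (simp add: z_def I_iff v_inverse)
    then have "g * z + z ^ 3 \<in> I 1" using assms(3) by (simp add: I_add I0_mult I1_power)
    then have "u + (g * z + z ^ 3) \<noteq> 0" using assms(1,2) by (rule unit_add_I1_nonzero[rotated 2])
    moreover have "u * y ^ 3 + g * y ^ 2 + 1 = y ^ 3 * (u + (g * z + z ^ 3))"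
      using 3 by (simp add: z_def field_simps power2_eq_square power3_eq_cube)
    ultimately show ?thesis using 3 by simp
  qed (use no_unit_root[of y] in auto)
qed

text \<open>Substituting x = s y with 3 v s = v b_0 - v b_3 turns the cubic into b_0 (u y^3 + g y^2 + 1)
  with a unit u and g = c s^2 / b_0.\<close>
lemma exists_square_coeff_no_root_cubic:
  fixes b :: "nat \<Rightarrow> 'k"
  assumes "finite_residue_field v" "b 0 \<noteq> 0" "b 3 \<noteq> 0" "b 1 = 0"
  shows "\<exists>c. \<forall>x. (\<Sum>i\<le>3. (b(2 := c)) i * x ^ i) \<noteq> 0"
proof (cases "3 dvd (v (b 3) - v (b 0))")
  case False
  have "(\<Sum>i\<le>3. (b(2 := 0)) i * x ^ i) \<noteq> 0" for x
  proof (rule power_sum_nonzero_single_edge)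
    fix i :: nat assume "0 < i" "i < 3" "(b(2 := 0)) i \<noteq> 0"
    then show "(int 3 - int i) * v ((b(2 := 0)) 0) + int i * v ((b(2 := 0)) 3)
        < int 3 * v ((b(2 := 0)) i)"
      using assms(4) by (auto simp: numeral_eq_Suc less_Suc_eq)
  qed (use assms(2,3) False in auto)
  then show ?thesis by blast
next
  case True
  then obtain t where t: "v (b 0) - v (b 3) = 3 * t" by (metis dvd_def dvd_diff_commute)
  obtain s where s: "s \<noteq> 0" "v s = t" using ex_valuation_eq by blast
  define u where "u = b 3 * s ^ 3 / b 0"
  have u: "u \<noteq> 0" "v u = 0" using assms(2,3) s t by (simp_all add: u_def v_divide v_mult v_power)
  then obtain g where g: "g \<in> I 0"
    and "\<forall>y. y \<noteq> 0 \<longrightarrow> v y = 0 \<longrightarrow> u * y ^ 3 + g * y ^ 2 + 1 \<notin> I 1"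
    using exists_coeff_no_unit_root_mod[OF assms(1), of u] by (auto simp: I_iff)
  then have normalized_nonzero: "u * y ^ 3 + g * y ^ 2 + 1 \<noteq> 0" for y
    using normalized_cubic_nonzero[OF u g] by blast
  have "(\<Sum>i\<le>3. (b(2 := g * b 0 / s ^ 2)) i * x ^ i) \<noteq> 0" for x
  proof -
    have "(\<Sum>i\<le>3. (b(2 := g * b 0 / s ^ 2)) i * x ^ i)
        = b 0 * (u * (x / s) ^ 3 + g * (x / s) ^ 2 + 1)"
      using assms(2,4) s(1) by (simp add: eval_nat_numeral u_def field_simps)
    then show ?thesis using assms(2) normalized_nonzero[of "x / s"] by simp
  qed
  then show ?thesis by blast
qed

end

section \<open>The coefficient-choosing game\<close>

definition open_coeffs :: "nat \<Rightarrow> 'k position \<Rightarrow> nat set" where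
  "open_coeffs d a = {i. i \<le> d \<and> a i = None}"

definition endpoints_nonzero :: "nat \<Rightarrow> 'k::zero position \<Rightarrow> bool" where
  "endpoints_nonzero d a \<longleftrightarrow> a 0 \<noteq> Some 0 \<and> a d \<noteq> Some 0"

lemma finite_open_coeffs [simp]: "finite (open_coeffs d a)"
  unfolding open_coeffs_def by (rule finite_subset[of _ "{..d}"]) auto

lemma open_coeffs_empty_position: "open_coeffs d (\<lambda>_. None) = {..d}"
  by (auto simp: open_coeffs_def)

lemma complete_pos_iff_card: "complete_pos d a \<longleftrightarrow> card (open_coeffs d a) = 0"
proof -
  have "complete_pos d a \<longleftrightarrow> open_coeffs d a = {}"
    by (auto simp: complete_pos_def open_coeffs_def)
  then show ?thesis by simp
qed

lemma legal_move_open: "i \<in> open_coeffs d a \<Longrightarrow> legal_move d a i (1 :: 'k::field)"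
  by (simp add: open_coeffs_def legal_move_def)

lemma card_open_coeffs_move:
  assumes "legal_move d a i c"
  shows "card (open_coeffs d (a(i := Some c))) = card (open_coeffs d a) - 1"
proof -
  have "i \<in> open_coeffs d a" "open_coeffs d (a(i := Some c)) = open_coeffs d a - {i}"
    using assms by (auto simp: open_coeffs_def legal_move_def)
  then show ?thesis by simp
qed

lemma endpoints_nonzero_move:
  "endpoints_nonzero d a \<Longrightarrow> legal_move d a i c \<Longrightarrow> endpoints_nonzero d (a(i := Some c))"
  by (auto simp: endpoints_nonzero_def legal_move_def)

lemma last_open_coeff:
  assumes "open_coeffs d a = {j}"
  shows "j \<le> d" "a j = None" "\<And>i. i \<le> d \<Longrightarrow> i \<noteq> j \<Longrightarrow> a i = Some (the (a i))"
    "complete_pos d (a(j := Some c))"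
proof -
  have open_iff: "i \<le> d \<and> a i = None \<longleftrightarrow> i = j" for i
  proof -
    have "i \<in> open_coeffs d a \<longleftrightarrow> i = j" using assms by simp
    then show ?thesis unfolding open_coeffs_def by (simp only: mem_Collect_eq)
  qed
  show "j \<le> d" "a j = None" using open_iff[of j] by simp_all
  show "a i = Some (the (a i))" if "i \<le> d" "i \<noteq> j" for i
    using open_iff[of i] that by auto
  show "complete_pos d (a(j := Some c))"
    unfolding complete_pos_def
  proof (intro allI impI)
    fix i assume "i \<le> d"
    then show "(a(j := Some c)) i \<noteq> None" using open_iff[of i] by auto
  qed
qed

lemma poly_final_poly:
  fixes a :: "'k::comm_semiring_1 position"
  shows "poly (final_poly d a) x = (\<Sum>i\<le>d. the (a i) * x ^ i)"
  by (simp add: final_poly_def poly_sum poly_monom)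

lemma other_neq [simp]: "other P \<noteq> P"
  by (cases P) simp_all

lemma wins_by_last_move:
  assumes "open_coeffs d a = {j}" "legal_move d a j c" "winner d (a(j := Some c)) = P"
  shows "wins d P a P"
proof (rule wins.own_move[OF _ assms(2)])
  show "\<not> complete_pos d a" using assms(1) by (simp add: complete_pos_iff_card)
  show "wins d P (a(j := Some c)) (other P)"
    using last_open_coeff(4)[OF assms(1)] assms(3) by (rule wins.finished)
qed

text \<open>P makes the last move, so she is to move exactly when an odd number of coefficients is open.\<close>
lemma wins_of_invariant:
  fixes Inv :: "'k::field position \<Rightarrow> bool"
  assumes last: "\<And>a j. Inv a \<Longrightarrow> open_coeffs d a = {j} \<Longrightarrow>
      \<exists>c. legal_move d a j c \<and> winner d (a(j := Some c)) = P"
    and own: "\<And>a. Inv a \<Longrightarrow> odd (card (open_coeffs d a)) \<Longrightarrow> 3 \<le> card (open_coeffs d a) \<Longrightarrow>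
      \<exists>i c. legal_move d a i c \<and> Inv (a(i := Some c))"
    and opp: "\<And>a i c. Inv a \<Longrightarrow> even (card (open_coeffs d a)) \<Longrightarrow> legal_move d a i c \<Longrightarrow>
      Inv (a(i := Some c))"
    and "Inv a" "0 < card (open_coeffs d a)" "m = P \<longleftrightarrow> odd (card (open_coeffs d a))"
  shows "wins d P a m"
proof -
  have "wins d P a m" if "Inv a" "card (open_coeffs d a) = Suc n" "m = P \<longleftrightarrow> even n" for n a m
    using that
  proof (induction n arbitrary: a m)
    case 0
    then obtain j where j: "open_coeffs d a = {j}" using card_1_singletonE by auto
    then obtain c where "legal_move d a j c" "winner d (a(j := Some c)) = P"
      using last[OF 0(1)] by blast
    moreover have "m = P" using 0 by simp
    ultimately show ?case using wins_by_last_move[OF j] by blast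
  next
    case (Suc n)
    have incomplete: "\<not> complete_pos d a" using Suc.prems by (simp add: complete_pos_iff_card)
    have after: "wins d P (a(i := Some c)) m'"
      if "Inv (a(i := Some c))" "legal_move d a i c" "m' = P \<longleftrightarrow> even n" for i c m'
    proof -
      have "card (open_coeffs d (a(i := Some c))) = Suc n"
        using card_open_coeffs_move[OF that(2)] Suc.prems(2) by simp
      then show ?thesis using Suc.IH that(1,3) by blast
    qed
    show ?case
    proof (cases "m = P")
      case True
      then obtain i c where move: "legal_move d a i c" "Inv (a(i := Some c))"
        using own[OF Suc.prems(1)] Suc.prems(2,3) odd_pos[of n] by auto
      then have "wins d P (a(i := Some c)) (other P)" using after True Suc.prems(3) by simp
      then show ?thesis using wins.own_move[OF incomplete move(1)] True by simp
    next
      case False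
      then have "wins d P (a(i := Some c)) P" if "legal_move d a i c" for i c
        using after opp[OF Suc.prems(1)] that Suc.prems(2,3) by simp
      then show ?thesis using wins.opp_move[OF incomplete] False by blast
    qed
  qed
  moreover obtain n where "card (open_coeffs d a) = Suc n" using assms(5) gr0_implies_Suc by blast
  ultimately show ?thesis using assms(4,6) by simp
qed

lemma ex_nonzero_nonroot:
  fixes p :: "'a::idom poly"
  assumes "infinite (UNIV :: 'a set)" "p \<noteq> 0"
  shows "\<exists>x. x \<noteq> 0 \<and> poly p x \<noteq> 0"
proof -
  have "finite (insert 0 {x. poly p x = 0})" using poly_roots_finite[OF assms(2)] by simp
  then have "insert 0 {x. poly p x = 0} \<noteq> UNIV" using assms(1) by metis
  then show ?thesis by blast
qed

lemma coeff_final_poly: "k \<le> d \<Longrightarrow> coeff (final_poly d a) k = the (a k)"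
  by (simp add: final_poly_def coeff_sum coeff_monom)

lemma final_poly_update:
  assumes "j \<le> d"
  shows "final_poly d (a(j := Some c)) = monom c j + final_poly d (a(j := Some 0))"
proof -
  have "final_poly d (a(j := Some c))
      = (\<Sum>i\<le>d. monom (the ((a(j := Some 0)) i)) i + (if i = j then monom c j else 0))"
    unfolding final_poly_def by (rule sum.cong) auto
  then show ?thesis using assms by (simp add: sum.distrib final_poly_def add.commute)
qed

text \<open>The solved coefficient is nonzero, so the move is legal even at an endpoint.\<close>
lemma wanda_last_move:
  fixes a :: "'k::field position"
  assumes "infinite (UNIV :: 'k set)" "1 \<le> d" "endpoints_nonzero d a" "open_coeffs d a = {j}"
  shows "\<exists>c. legal_move d a j c \<and> winner d (a(j := Some c)) = Wanda"
proof -
  note last = last_open_coeff[OF assms(4)]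
  let ?r = "final_poly d (a(j := Some 0))"
  define k where "k = (if j = 0 then d else 0)"
  have "k \<le> d" "k \<noteq> j" using assms(2) by (auto simp: k_def)
  then have "coeff ?r k \<noteq> 0"
    using last(3)[of k] assms(3) by (auto simp: coeff_final_poly k_def endpoints_nonzero_def)
  then have "?r \<noteq> 0" by auto
  then obtain x where x: "x \<noteq> 0" "poly ?r x \<noteq> 0"
    using ex_nonzero_nonroot[OF assms(1)] by blast
  define c where "c = - poly ?r x / x ^ j"
  have "legal_move d a j c" using last(1,2) x by (simp add: legal_move_def c_def)
  moreover have "poly (final_poly d (a(j := Some c))) x = 0"
    unfolding final_poly_update[OF last(1), of a c] using x by (simp add: poly_monom c_def)
  ultimately show ?thesis by (auto simp: winner_def)
qed

lemma wanda_wins: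
  fixes a :: "'k::field position"
  assumes "infinite (UNIV :: 'k set)" "1 \<le> d" "endpoints_nonzero d a"
    and "0 < card (open_coeffs d a)" "m = Wanda \<longleftrightarrow> odd (card (open_coeffs d a))"
  shows "wins d Wanda a m"
proof (rule wins_of_invariant[where Inv = "endpoints_nonzero d"])
  fix a' :: "'k position" assume a': "endpoints_nonzero d a'" "3 \<le> card (open_coeffs d a')"
  then obtain i where "i \<in> open_coeffs d a'" by fastforce
  then show "\<exists>i c. legal_move d a' i c \<and> endpoints_nonzero d (a'(i := Some c))"
    using legal_move_open endpoints_nonzero_move a'(1) by blast
next
  fix a' :: "'k position" and j assume "endpoints_nonzero d a'" "open_coeffs d a' = {j}"
  then show "\<exists>c. legal_move d a' j c \<and> winner d (a'(j := Some c)) = Wanda"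
    by (rule wanda_last_move[OF assms(1,2)])
qed (use endpoints_nonzero_move assms(3-5) in simp_all)

definition filled_nonzero :: "'k::zero position \<Rightarrow> nat \<Rightarrow> bool" where
  "filled_nonzero a i \<longleftrightarrow> a i \<noteq> None \<and> a i \<noteq> Some 0"

text \<open>The open coefficients Nora must not be left with for her last move: a_1 and a_(d-1), and for
  d = 3, 4 also a_2 once a neighbour is nonzero. Counting a_2 only from then on keeps the initial
  count within what Nora can clear, one zero per move, before the last move.\<close>
definition threats :: "nat \<Rightarrow> 'k::zero position \<Rightarrow> nat" where
  "threats d a = of_bool (a 1 = None) +
     (if d = 3 then of_bool (a 2 = None \<and> filled_nonzero a 1)
      else if d = 4 then of_bool (a 3 = None) +
        of_bool (a 2 = None \<and> (filled_nonzero a 1 \<or> filled_nonzero a 3))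
      else of_bool (d \<noteq> 2 \<and> a (d - 1) = None))"

lemma threats_empty_position: "2 \<le> d \<Longrightarrow> 2 * threats d (\<lambda>_. None) \<le> d"
  by (auto simp: threats_def filled_nonzero_def)

lemma threats_move_le:
  assumes "legal_move d a i c"
  shows "threats d (a(i := Some c)) \<le> threats d a"
  using assms by (auto simp: threats_def filled_nonzero_def legal_move_def)

lemma ex_move_decreasing_threats:
  fixes a :: "'k::zero position"
  assumes "2 \<le> d" "0 < threats d a"
  shows "\<exists>i. legal_move d a i 0 \<and> threats d (a(i := Some 0)) < threats d a"
proof -
  have zero_move: "\<exists>i. legal_move d a i 0 \<and> threats d (a(i := Some 0)) < threats d a"
    if "0 < i" "i < d" "a i = None" "threats d (a(i := Some 0)) < threats d a" for i
    using that by (intro exI[of _ i]) (auto simp: legal_move_def)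
  consider "d = 4" "a 2 = None" "filled_nonzero a 1 \<or> filled_nonzero a 3"
    | "a 1 = None"
    | "d = 3" "a 2 = None" "filled_nonzero a 1"
    | "d = 4" "a 3 = None" "a 2 = None \<longrightarrow> \<not> filled_nonzero a 1"
    | "d \<noteq> 3" "d \<noteq> 4" "d \<noteq> 2" "a (d - 1) = None"
    using assms(2)
    by (cases "a 2 = None"; cases "filled_nonzero a 1"; cases "filled_nonzero a 3")
      (auto simp: threats_def split: if_splits)
  then show ?thesis
  proof cases
    case 1
    then show ?thesis by (intro zero_move[of 2]) (auto simp: threats_def filled_nonzero_def)
  next
    case 2
    then show ?thesis
      using assms(1) by (intro zero_move[of 1]) (auto simp: threats_def filled_nonzero_def)
  next
    case 3
    then show ?thesis by (intro zero_move[of 2]) (auto simp: threats_def filled_nonzero_def)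
  next
    case 4
    then show ?thesis by (intro zero_move[of 3]) (auto simp: threats_def filled_nonzero_def)
  next
    case 5
    then show ?thesis using assms(1)
      by (intro zero_move[of "d - 1"]) (auto simp: threats_def filled_nonzero_def)
  qed
qed

lemma threats_zero_middle_open:
  fixes a :: "'k::zero position"
  assumes "threats d a = 0" "a j = None" "0 < j" "j < d"
  shows "d = 3 \<and> j = 2 \<and> a 1 = Some 0 \<or> d = 4 \<and> j = 2 \<and> a 1 = Some 0 \<and> a 3 = Some 0 \<or>
    5 \<le> d \<and> 2 \<le> j \<and> j + 2 \<le> d"
proof -
  have "j \<noteq> 1" using assms(1,2) by (auto simp: threats_def)
  consider "d = 3" | "d = 4" | "5 \<le> d" using assms(3,4) \<open>j \<noteq> 1\<close> by linarith
  then show ?thesis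
  proof cases
    case 1
    then have "j = 2" using assms(3,4) \<open>j \<noteq> 1\<close> by linarith
    then show ?thesis using assms(1,2) 1 by (auto simp: threats_def filled_nonzero_def)
  next
    case 2
    then have "a 3 \<noteq> None" using assms(1) by (auto simp: threats_def)
    then have "j = 2" using 2 assms(2-4) \<open>j \<noteq> 1\<close> by (cases "j = 3") auto
    then show ?thesis using assms 2 by (auto simp: threats_def filled_nonzero_def)
  next
    case 3
    then have "j \<noteq> d - 1" using assms(1,2) by (auto simp: threats_def)
    then show ?thesis using 3 assms(3,4) \<open>j \<noteq> 1\<close> by auto
  qed
qed

context valued_field
begin

lemma exists_last_coeff_no_root:
  fixes b :: "nat \<Rightarrow> 'k"
  assumes "finite_residue_field v" "2 \<le> d" "j \<le> d" "j \<noteq> 0 \<Longrightarrow> b 0 \<noteq> 0" "j \<noteq> d \<Longrightarrow> b d \<noteq> 0"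
    and middle: "0 < j \<Longrightarrow> j < d \<Longrightarrow> d = 3 \<and> j = 2 \<and> b 1 = 0 \<or>
      d = 4 \<and> j = 2 \<and> b 1 = 0 \<and> b 3 = 0 \<or> 5 \<le> d \<and> 2 \<le> j \<and> j + 2 \<le> d"
  shows "\<exists>c. (c \<noteq> 0 \<or> 0 < j \<and> j < d) \<and> (\<forall>x. (\<Sum>i\<le>d. (b(j := c)) i * x ^ i) \<noteq> 0)"
proof -
  consider "j = 0" | "j = d" | "0 < j" "j < d" using assms(3) by linarith
  then show ?thesis
  proof cases
    case 1
    then show ?thesis using exists_const_coeff_no_root[OF assms(2), of b] assms(2,5) by auto
  next
    case 2
    then show ?thesis using exists_lead_coeff_no_root[OF assms(2), of b] assms(2,4) by auto
  next
    case 3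
    then have "b 0 \<noteq> 0" "b d \<noteq> 0" using assms(4,5) by simp_all
    consider "d = 3" "j = 2" "b 1 = 0" | "d = 4" "j = 2" "b 1 = 0" "b 3 = 0"
      | "5 \<le> d" "2 \<le> j" "j + 2 \<le> d"
      using middle[OF 3] by blast
    then show ?thesis
    proof cases
      case 1
      then show ?thesis
        using exists_square_coeff_no_root_cubic[OF assms(1), of b] \<open>b 0 \<noteq> 0\<close> \<open>b d \<noteq> 0\<close> 3 by auto
    next
      case 2
      show ?thesis
      proof (cases "2 dvd (v (b 0) - v (b 4))")
        case True
        then show ?thesis
          using exists_middle_coeff_no_root[of j d b] \<open>b 0 \<noteq> 0\<close> \<open>b d \<noteq> 0\<close> 2 3 by auto
      next
        case False
        then have "\<forall>x. (\<Sum>i\<le>4. (b(2 := 0)) i * x ^ i) \<noteq> 0"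
          using quartic_no_root_of_odd_gap[of "b(2 := 0)"] \<open>b 0 \<noteq> 0\<close> \<open>b d \<noteq> 0\<close> 2 by simp
        then show ?thesis using 2 3 by auto
      qed
    next
      case 3
      then show ?thesis
        using exists_middle_coeff_no_root[of j d b] \<open>b 0 \<noteq> 0\<close> \<open>b d \<noteq> 0\<close> by auto
    qed
  qed
qed

lemma nora_last_move:
  fixes a :: "'k position"
  assumes "finite_residue_field v" "2 \<le> d" "endpoints_nonzero d a" "open_coeffs d a = {j}"
    and "threats d a = 0"
  shows "\<exists>c. legal_move d a j c \<and> winner d (a(j := Some c)) = Nora"
proof -
  note last = last_open_coeff[OF assms(4)]
  define b where "b i = the (a i)" for i
  have filled: "a i = Some (b i)" if "i \<le> d" "i \<noteq> j" for i
    using last(3)[OF that] by (simp add: b_def)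
  have "j \<noteq> 0 \<Longrightarrow> b 0 \<noteq> 0" "j \<noteq> d \<Longrightarrow> b d \<noteq> 0"
    using filled[of 0] filled[of d] assms(3) by (auto simp: endpoints_nonzero_def)
  moreover have "d = 3 \<and> j = 2 \<and> b 1 = 0 \<or> d = 4 \<and> j = 2 \<and> b 1 = 0 \<and> b 3 = 0 \<or>
      5 \<le> d \<and> 2 \<le> j \<and> j + 2 \<le> d" if "0 < j" "j < d"
    using threats_zero_middle_open[OF assms(5) last(2) that] filled[of 1] filled[of 3] by auto
  ultimately obtain c where c: "c \<noteq> 0 \<or> 0 < j \<and> j < d"
    and no_root: "\<forall>x. (\<Sum>i\<le>d. (b(j := c)) i * x ^ i) \<noteq> 0"
    using exists_last_coeff_no_root[OF assms(1,2) last(1)] by blast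
  have "poly (final_poly d (a(j := Some c))) x = (\<Sum>i\<le>d. (b(j := c)) i * x ^ i)" for x
    unfolding poly_final_poly by (rule sum.cong) (simp_all add: b_def)
  then have "winner d (a(j := Some c)) = Nora" using no_root by (simp add: winner_def)
  moreover have "legal_move d a j c" using c last(1,2) by (auto simp: legal_move_def)
  ultimately show ?thesis by blast
qed

text \<open>Wanda's moves never increase the threats and each move of Nora removes one; as Nora is to
  move exactly when the number of open coefficients is odd, this preserves the invariant.\<close>
lemma nora_wins:
  fixes a :: "'k position"
  assumes "finite_residue_field v" "2 \<le> d" "endpoints_nonzero d a"
    and "2 * threats d a < card (open_coeffs d a)" "m = Nora \<longleftrightarrow> odd (card (open_coeffs d a))"
  shows "wins d Nora a m"
proof (rule wins_of_invariant[where
      Inv = "\<lambda>a. endpoints_nonzero d a \<and> 2 * threats d a < card (open_coeffs d a)"])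
  fix a' :: "'k position" and j
  assume "endpoints_nonzero d a' \<and> 2 * threats d a' < card (open_coeffs d a')"
    and "open_coeffs d a' = {j}"
  moreover from this have "threats d a' = 0" by simp
  ultimately show "\<exists>c. legal_move d a' j c \<and> winner d (a'(j := Some c)) = Nora"
    using nora_last_move[OF assms(1,2)] by blast
next
  fix a' :: "'k position"
  assume inv: "endpoints_nonzero d a' \<and> 2 * threats d a' < card (open_coeffs d a')"
    and n: "odd (card (open_coeffs d a'))" "3 \<le> card (open_coeffs d a')"
  obtain i c where move: "legal_move d a' i c"
    and fewer: "threats d (a'(i := Some c)) < threats d a' \<or> threats d a' = 0"
  proof (cases "threats d a' = 0")
    case True
    obtain i where "i \<in> open_coeffs d a'" using n(2) by fastforce
    with True show ?thesis using that legal_move_open by blast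
  next
    case False
    then show ?thesis using that ex_move_decreasing_threats[OF assms(2)] by blast
  qed
  have "2 * threats d (a'(i := Some c)) < card (open_coeffs d a') - 1"
    using fewer threats_move_le[OF move] inv n by auto
  then show "\<exists>i c. legal_move d a' i c \<and> endpoints_nonzero d (a'(i := Some c)) \<and>
      2 * threats d (a'(i := Some c)) < card (open_coeffs d (a'(i := Some c)))"
    using move inv endpoints_nonzero_move card_open_coeffs_move by metis
next
  fix a' :: "'k position" and i c
  assume inv: "endpoints_nonzero d a' \<and> 2 * threats d a' < card (open_coeffs d a')"
    and "even (card (open_coeffs d a'))" and move: "legal_move d a' i c"
  have "2 * threats d a' < card (open_coeffs d a')" using inv by blast
  moreover have "2 * t < n \<Longrightarrow> even n \<Longrightarrow> 2 * t < n - 1" for t n :: nat by presburger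
  ultimately have "2 * threats d a' < card (open_coeffs d a') - 1"
    using \<open>even (card (open_coeffs d a'))\<close> by blast
  then have "2 * threats d (a'(i := Some c)) < card (open_coeffs d a') - 1"
    using threats_move_le[OF move] by linarith
  then show "endpoints_nonzero d (a'(i := Some c)) \<and>
      2 * threats d (a'(i := Some c)) < card (open_coeffs d (a'(i := Some c)))"
    using inv endpoints_nonzero_move[OF _ move] card_open_coeffs_move[OF move] by simp
qed (use assms(3-5) in simp_all)

end

theorem theorem3:
  fixes v :: "'k::field \<Rightarrow> int" and d :: nat and first :: player
  assumes "d > 1"
    and "local_field_valuation v"
  shows "wins d (last_mover d first) ((\<lambda>_. None) :: 'k position) first"
proof -
  interpret valued_field v
    using assms(2) by (simp add: valued_field_def local_field_valuation_def)
  have residue_field: "finite_residue_field v"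
    using assms(2) by (simp add: local_field_valuation_def)
  let ?a = "(\<lambda>_. None) :: 'k position"
  have start: "endpoints_nonzero d ?a" "card (open_coeffs d ?a) = Suc d"
    by (simp_all add: endpoints_nonzero_def open_coeffs_empty_position)
  have parity: "first = last_mover d first \<longleftrightarrow> odd (Suc d)"
    by (cases first) (simp_all add: last_mover_def)
  show ?thesis
  proof (cases "last_mover d first")
    case Nora
    have "2 * threats d ?a < card (open_coeffs d ?a)"
      using threats_empty_position[of d] assms(1) start(2) by (simp add: less_Suc_eq_le)
    then show ?thesis
      using nora_wins[OF residue_field _ start(1)] Nora assms(1) start(2) parity by simp
  next
    case Wanda
    then show ?thesis
      using wanda_wins[OF infinite_UNIV _ start(1)] assms(1) start(2) parity by simp
  qed
qed

end
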